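(* Let $M$ be an $m\times n$ ACI-matrix over a field $\mathbb{F}$, let $F\subseteq\{1,\dots,n\}$ be a factor set (resp. semifactor set) of $M$, and let $P$ be a permutation matrix of order $m$ such that $$PMQ_F=\begin{bmatrix} A & B\\ 0 & C\end{bmatrix},$$ where $A$ has $\#F$ columns and $A$ has linearly independent rows. Then this block decomposition is an $F$-decomposition (resp. $F$-semidecomposition); that is, the zero block is Big (resp. Medium), $A$ is FRmR and $C$ is FCmR.
   Context: Let $\mathbb{F}$ be a field. An ACI-matrix is a matrix with entries in $\mathbb{F}[x_1,\dots,x_k]$ whose entries are polynomials of degree at most one and such that no indeterminate appears in two different columns. A completion is an assignment of values in $\mathbb{F}$ to all indeterminates; $\mathrm{maxRank}(N)$ is the maximum rank of a completion. ACI-matrices (and blocks) of size $0\times q$ ($q>0$, wide degenerate), $p\times 0$ ($p>0$, tall degenerate) and $0\times0$ (void) are allowed. $N$ is FRmR if $\mathrm{maxRank}(N)=\mathrm{rows}(N)$, FCmR if $\mathrm{maxRank}(N)=\mathrm{cols}(N)$; by convention tall degenerate is FRmR, wide degenerate is FCmR, void is both. For an $m\times n$ block matrix $\begin{bmatrix} A & B\\ 0 & C\end{bmatrix}$ with lower-left $r\times s$ zero block, the zero block is Big if $r+s>\max\{m,n\}$, Medium if $r+s=\max\{m,n\}$. For $F=\{f_1<\dots<f_s\}\subseteq\{1,\dots,n\}$ with complement $\{g_1<\dots<g_{n-s}\}$, $Q_F$ is the $n\times n$ permutation matrix such that $MQ_F$ has as columns $f_1,\dots,f_s,g_1,\dots,g_{n-s}$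 of $M$ in that order. $F$ is a factor set of $M$ if there is a nonsingular constant $m\times m$ matrix $R$ with $RMQ_F=\begin{bmatrix} A & B\\ 0 & C\end{bmatrix}$, $A$ having $\#F$ columns, the zero block Big, $A$ FRmR and $C$ FCmR; such an $RMQ_F$ is an $F$-decomposition. $F$ is a semifactor set (and $RMQ_F$ an $F$-semidecomposition) if the same holds with the zero block Medium. Linear independence of rows is over $\mathbb{F}$: if a column involves indeterminates $y_1,\dots,y_t$, its entries lie in the $\mathbb{F}$-vector space $\mathbb{F}+\mathbb{F}y_1+\dots+\mathbb{F}y_t$, and rows are vectors in the product of these spaces. *)

theory Defs
  imports "Jordan_Normal_Form.DL_Rank"
begin

text \<open>An ACI-matrix over the field 'a in the finitely many indeterminates of the
  finite type 'v is represented by its affine decomposition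
  N = N None + sum over v of x_v * N (Some v), where N None is the constant part
  and N (Some v) is the coefficient matrix of the indeterminate x_v.
  (Entries are polynomials of degree at most one.)\<close>

type_synonym ('a, 'v) aci = "'v option \<Rightarrow> 'a mat"

definition aci_dim :: "('a, 'v) aci \<Rightarrow> nat \<Rightarrow> nat \<Rightarrow> bool" where
  "aci_dim N m n \<longleftrightarrow> (\<forall>k. N k \<in> carrier_mat m n)"

definition aci_rows :: "('a, 'v) aci \<Rightarrow> nat" where
  "aci_rows N = dim_row (N None)"

definition aci_cols :: "('a, 'v) aci \<Rightarrow> nat" where
  "aci_cols N = dim_col (N None)"

definition is_aci :: "('a::zero, 'v) aci \<Rightarrow> nat \<Rightarrow> nat \<Rightarrow> bool" where
  "is_aci N m n \<longleftrightarrow> aci_dim N m n \<and>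
     (\<forall>v i i' j j'. i < m \<longrightarrow> i' < m \<longrightarrow> j < n \<longrightarrow> j' < n \<longrightarrow>
        N (Some v) $$ (i, j) \<noteq> 0 \<longrightarrow> N (Some v) $$ (i', j') \<noteq> 0 \<longrightarrow> j = j')"

definition completion :: "('a::field, 'v::finite) aci \<Rightarrow> ('v \<Rightarrow> 'a) \<Rightarrow> 'a mat" where
  "completion N s = mat (aci_rows N) (aci_cols N)
     (\<lambda>(i, j). N None $$ (i, j) + (\<Sum>v\<in>UNIV. s v * N (Some v) $$ (i, j)))"

definition mat_rank :: "'a::field mat \<Rightarrow> nat" where
  "mat_rank A = vec_space.rank (dim_row A) A"

definition maxRank :: "('a::field, 'v::finite) aci \<Rightarrow> nat" where
  "maxRank N = Max (range (\<lambda>s. mat_rank (completion N s)))"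

text \<open>Full row / column maximum rank, with the degenerate conventions:
  tall degenerate (p x 0) is FRmR, wide degenerate (0 x q) is FCmR.\<close>
definition FRmR :: "('a::field, 'v::finite) aci \<Rightarrow> bool" where
  "FRmR N \<longleftrightarrow> aci_cols N = 0 \<or> maxRank N = aci_rows N"

definition FCmR :: "('a::field, 'v::finite) aci \<Rightarrow> bool" where
  "FCmR N \<longleftrightarrow> aci_rows N = 0 \<or> maxRank N = aci_cols N"

definition rows_lin_indep :: "('a::field, 'v) aci \<Rightarrow> bool" where
  "rows_lin_indep N \<longleftrightarrow>
     (\<forall>c::nat \<Rightarrow> 'a. (\<forall>k j. j < aci_cols N \<longrightarrow>
          (\<Sum>i<aci_rows N. c i * N k $$ (i, j)) = 0)
        \<longrightarrow> (\<forall>i < aci_rows N. c i = 0))"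

definition aci_lmult :: "'a::field mat \<Rightarrow> ('a, 'v) aci \<Rightarrow> ('a, 'v) aci" where
  "aci_lmult R N = (\<lambda>k. R * N k)"

definition aci_rmult :: "('a::field, 'v) aci \<Rightarrow> 'a mat \<Rightarrow> ('a, 'v) aci" where
  "aci_rmult N Q = (\<lambda>k. N k * Q)"

definition aci_block :: "('a, 'v) aci \<Rightarrow> nat \<Rightarrow> nat \<Rightarrow> nat \<Rightarrow> nat \<Rightarrow> ('a, 'v) aci" where
  "aci_block N r0 r1 c0 c1 = (\<lambda>k. mat (r1 - r0) (c1 - c0) (\<lambda>(i, j). N k $$ (i + r0, j + c0)))"

text \<open>Column indices are 0-based: F \<subseteq> {0..<n}. The column order of M * Q_F is
  the elements of F increasingly, followed by the complement increasingly.\<close>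
definition col_order :: "nat \<Rightarrow> nat set \<Rightarrow> nat list" where
  "col_order n F = sorted_list_of_set F @ sorted_list_of_set ({0..<n} - F)"

definition Q_F :: "nat \<Rightarrow> nat set \<Rightarrow> 'a::field mat" where
  "Q_F n F = mat n n (\<lambda>(i, j). if i = col_order n F ! j then 1 else 0)"

definition permutation_mat :: "nat \<Rightarrow> 'a::field mat \<Rightarrow> bool" where
  "permutation_mat m P \<longleftrightarrow>
     (\<exists>\<pi>. bij_betw \<pi> {0..<m} {0..<m} \<and> P = mat m m (\<lambda>(i, j). if j = \<pi> i then 1 else 0))"

text \<open>Block upper triangular shape [A B; 0 C] with A of size p x s, m x n in total,
  i.e. the lower-left (m - p) x s block is zero.\<close>
definition lower_left_zero :: "('a::zero, 'v) aci \<Rightarrow> nat \<Rightarrow> nat \<Rightarrow> bool" where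
  "lower_left_zero N p s \<longleftrightarrow>
     p \<le> aci_rows N \<and> s \<le> aci_cols N \<and>
     (\<forall>k i j. p \<le> i \<longrightarrow> i < aci_rows N \<longrightarrow> j < s \<longrightarrow> N k $$ (i, j) = 0)"

definition blockA :: "('a, 'v) aci \<Rightarrow> nat \<Rightarrow> nat \<Rightarrow> ('a, 'v) aci" where
  "blockA N p s = aci_block N 0 p 0 s"

definition blockC :: "('a, 'v) aci \<Rightarrow> nat \<Rightarrow> nat \<Rightarrow> ('a, 'v) aci" where
  "blockC N p s = aci_block N p (aci_rows N) s (aci_cols N)"

definition zero_big :: "nat \<Rightarrow> nat \<Rightarrow> nat \<Rightarrow> nat \<Rightarrow> bool" where
  "zero_big m n r s \<longleftrightarrow> r + s > max m n"

definition zero_medium :: "nat \<Rightarrow> nat \<Rightarrow> nat \<Rightarrow> nat \<Rightarrow> bool" where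
  "zero_medium m n r s \<longleftrightarrow> r + s = max m n"

definition decomp_form :: "bool \<Rightarrow> ('a::field, 'v::finite) aci \<Rightarrow> nat \<Rightarrow> nat \<Rightarrow> nat \<Rightarrow> nat \<Rightarrow> bool" where
  "decomp_form big N m n s p \<longleftrightarrow>
     lower_left_zero N p s \<and>
     (if big then zero_big m n (m - p) s else zero_medium m n (m - p) s) \<and>
     FRmR (blockA N p s) \<and> FCmR (blockC N p s)"

definition factor_set :: "('a::field, 'v::finite) aci \<Rightarrow> nat \<Rightarrow> nat \<Rightarrow> nat set \<Rightarrow> bool" where
  "factor_set M m n F \<longleftrightarrow> F \<subseteq> {0..<n} \<and>
     (\<exists>R p. R \<in> carrier_mat m m \<and> det R \<noteq> 0 \<and>
        decomp_form True (aci_rmult (aci_lmult R M) (Q_F n F)) m n (card F) p)"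

definition semifactor_set :: "('a::field, 'v::finite) aci \<Rightarrow> nat \<Rightarrow> nat \<Rightarrow> nat set \<Rightarrow> bool" where
  "semifactor_set M m n F \<longleftrightarrow> F \<subseteq> {0..<n} \<and>
     (\<exists>R p. R \<in> carrier_mat m m \<and> det R \<noteq> 0 \<and>
        decomp_form False (aci_rmult (aci_lmult R M) (Q_F n F)) m n (card F) p)"

end

theory Submission
  imports Defs
begin

text \<open>Let R M Q_F = [A' B'; 0 C'] be an F-(semi)decomposition in which A' has q rows.
  Since R M Q_F = T (P M Q_F) with T = R P^T nonsingular, and the rows of A are
  independent, the entries of T below row q in the first p columns vanish; nonsingularity
  of T then forces p \<le> q. Consequently A' and C' are obtained from A and C by left
  multiplication with blocks of T. Left multiplication does not increase the maximum
  rank, so A' being FRmR gives q \<le> p; thus p = q, the zero blocks have the same size,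
  and A, C inherit FRmR and FCmR from A', C'.\<close>

lemma mem_cols_mult_mat:
  assumes X: "X \<in> carrier_mat n nc" and T: "T \<in> carrier_mat n' n"
    and s: "s \<in> set (cols (T * X))"
  shows "\<exists>u. u \<in> set (cols X) \<and> T *\<^sub>v u = s"
proof -
  from s obtain j where j: "s = col (T * X) j" "j \<in> {0..<dim_col (T * X)}"
    unfolding cols_def set_map set_upt by (rule imageE)
  then have j': "j < nc" using X by simp
  have "col X j \<in> set (cols X)"
    using j' X unfolding cols_def set_map set_upt by (intro imageI) simp
  moreover have "T *\<^sub>v col X j = s"
    by (simp only: j(1) col_mult2[OF T X j'])
  ultimately show ?thesis by (intro exI conjI)
qed

context vec_space
begin

lemma rank_lin_indpt_colsE:
  assumes "A \<in> carrier_mat n nc"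
  obtains S where "S \<subseteq> set (cols A)" "lin_indpt S" "rank A = card S"
proof -
  obtain S where S: "maximal S (\<lambda>T. T \<subseteq> set (cols A) \<and> lin_indpt T)"
    using maximal_exists[of "\<lambda>T. T \<subseteq> set (cols A) \<and> lin_indpt T" "card (set (cols A))" "{}"]
    by (meson List.finite_set card_mono empty_iff empty_subsetI finite_lin_indpt2 rev_finite_subset)
  then show ?thesis
    using rank_card_indpt[OF assms S] that unfolding maximal_def by blast
qed

lemma rank_le_nr:
  assumes "A \<in> carrier_mat n nc"
  shows "rank A \<le> n"
proof -
  obtain S where S: "S \<subseteq> set (cols A)" "lin_indpt S" "rank A = card S"
    using rank_lin_indpt_colsE[OF assms] .
  have "S \<subseteq> carrier_vec n"
    using S(1) assms cols_dim by blast
  then show ?thesis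
    using li_le_dim(2)[OF fin_dim _ S(2)] S(3) dim_is_n by simp
qed

lemma mult_mat_vec_lincomb_index:
  assumes T: "T \<in> carrier_mat n' n" and U: "finite U" "U \<subseteq> carrier_vec n" and r: "r < n'"
  shows "(T *\<^sub>v lincomb a U) $ r = (\<Sum>u\<in>U. a u * (T *\<^sub>v u) $ r)"
proof -
  have "(T *\<^sub>v lincomb a U) $ r = (\<Sum>k<n. T $$ (r, k) * lincomb a U $ k)"
    using T r lincomb_dim[OF U] by (simp add: scalar_prod_def atLeast0LessThan)
  also have "\<dots> = (\<Sum>k<n. T $$ (r, k) * (\<Sum>u\<in>U. a u * u $ k))"
    using lincomb_index[OF _ U(2)] by simp
  also have "\<dots> = (\<Sum>u\<in>U. a u * (\<Sum>k<n. T $$ (r, k) * u $ k))"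
    by (simp add: sum_distrib_left sum.swap[of _ U] algebra_simps)
  also have "\<dots> = (\<Sum>u\<in>U. a u * (T *\<^sub>v u) $ r)"
    using T U r by (intro sum.cong) (auto simp: scalar_prod_def atLeast0LessThan)
  finally show ?thesis .
qed

text \<open>Choosing for every vector of an independent set of columns of T X a column of X
  that T maps to it gives an independent set of columns of X of the same size.\<close>

lemma rank_mult_left_le:
  assumes X: "X \<in> carrier_mat n nc" and T: "T \<in> carrier_mat n' n"
  shows "vec_space.rank n' (T * X) \<le> rank X"
proof -
  interpret W: vec_space "TYPE('a)" n' .
  have TX: "T * X \<in> carrier_mat n' nc" using X T by simp
  obtain S where S: "S \<subseteq> set (cols (T * X))" "W.lin_indpt S" "W.rank (T * X) = card S"
    using W.rank_lin_indpt_colsE[OF TX] .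
  have "\<exists>u. u \<in> set (cols X) \<and> T *\<^sub>v u = s" if "s \<in> S" for s
    using mem_cols_mult_mat[OF X T] that S(1) by blast
  then obtain g where g: "\<And>s. s \<in> S \<Longrightarrow> g s \<in> set (cols X) \<and> T *\<^sub>v g s = s"
    by metis
  have inj: "inj_on g S"
    by (metis g inj_onI)
  have finS: "finite S" using S(1) finite_subset by blast
  have U: "g ` S \<subseteq> carrier_vec n" using g X cols_dim by blast
  have "lin_indpt (g ` S)"
  proof (rule finite_lin_indpt2)
    show "finite (g ` S)" using finS by simp
    show "g ` S \<subseteq> carrier_vec n" using U .
    fix a assume lc: "lincomb a (g ` S) = 0\<^sub>v n"
    have "W.lincomb (a \<circ> g) S = 0\<^sub>v n'"
    proof (rule eq_vecI)
      have Sc: "S \<subseteq> carrier_vec n'" using S(1) TX cols_dim by blast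
      show "dim_vec (W.lincomb (a \<circ> g) S) = dim_vec (0\<^sub>v n' :: 'a vec)"
        using W.lincomb_dim[OF finS Sc] by simp
      fix r assume "r < dim_vec (0\<^sub>v n' :: 'a vec)"
      then have r: "r < n'" by simp
      have "W.lincomb (a \<circ> g) S $ r = (\<Sum>s\<in>S. a (g s) * (T *\<^sub>v g s) $ r)"
        using W.lincomb_index[OF r Sc] g by simp
      also have "\<dots> = (\<Sum>u\<in>g ` S. a u * (T *\<^sub>v u) $ r)"
        by (simp add: sum.reindex[OF inj])
      also have "\<dots> = (T *\<^sub>v lincomb a (g ` S)) $ r"
        using mult_mat_vec_lincomb_index[OF T _ U r] finS by simp
      also have "\<dots> = 0" using lc T r by simp
      finally show "W.lincomb (a \<circ> g) S $ r = 0\<^sub>v n' $ r"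
        using r by simp
    qed
    then have "a \<circ> g \<in> S \<rightarrow> {0}"
      using W.not_lindepD[OF S(2) finS subset_refl] by auto
    then show "\<forall>u\<in>g ` S. a u = 0" by auto
  qed
  then have "card (g ` S) \<le> rank X"
    using rank_ge_card_indpt[OF X] g by blast
  then show ?thesis using S(3) card_image[OF inj] by simp
qed

end

lemma det_non_zero_left_inverseE:
  fixes A :: "'a::field mat"
  assumes "A \<in> carrier_mat n n" "det A \<noteq> 0"
  obtains B where "B \<in> carrier_mat n n" "B * A = 1\<^sub>m n"
  using det_non_zero_imp_unit[OF assms, of "()"] that
  unfolding Units_def ring_mat_def by auto

lemma mult_mat_index_sum_subset:
  assumes A: "A \<in> carrier_mat a b" and B: "B \<in> carrier_mat b c" and i: "i < a" and j: "j < c"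
    and L: "L \<subseteq> {..<b}" and vanish: "\<And>l. l < b \<Longrightarrow> l \<notin> L \<Longrightarrow> A $$ (i, l) * B $$ (l, j) = 0"
  shows "(A * B) $$ (i, j) = (\<Sum>l\<in>L. A $$ (i, l) * B $$ (l, j))"
proof -
  have "(A * B) $$ (i, j) = (\<Sum>l<b. A $$ (i, l) * B $$ (l, j))"
    using A B i j by (simp add: scalar_prod_def atLeast0LessThan)
  also have "\<dots> = (\<Sum>l\<in>L. A $$ (i, l) * B $$ (l, j))"
    using L vanish by (intro sum.mono_neutral_right) auto
  finally show ?thesis .
qed

text \<open>The leading p \<times> q block of a left inverse of T is a left inverse of the
  q \<times> p block of T formed by its first p columns.\<close>

lemma zero_block_le_of_det_non_zero:
  fixes T :: "'a::field mat"
  assumes T: "T \<in> carrier_mat m m" "det T \<noteq> 0" and pq: "p \<le> m" "q \<le> m"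
    and zero: "\<And>i l. q \<le> i \<Longrightarrow> i < m \<Longrightarrow> l < p \<Longrightarrow> T $$ (i, l) = 0"
  shows "p \<le> q"
proof -
  obtain S where S: "S \<in> carrier_mat m m" "S * T = 1\<^sub>m m"
    using det_non_zero_left_inverseE[OF T] .
  define X where "X = mat p q (\<lambda>(i, l). S $$ (i, l))"
  define Y where "Y = mat q p (\<lambda>(l, j). T $$ (l, j))"
  have X: "X \<in> carrier_mat p q" and Y: "Y \<in> carrier_mat q p"
    unfolding X_def Y_def by auto
  have "X * Y = 1\<^sub>m p"
  proof (rule eq_matI)
    fix i j assume "i < dim_row (1\<^sub>m p :: 'a mat)" "j < dim_col (1\<^sub>m p :: 'a mat)"
    then have i: "i < p" and j: "j < p" by auto
    have "(X * Y) $$ (i, j) = (\<Sum>l<q. S $$ (i, l) * T $$ (l, j))"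
      using X Y i j by (simp add: scalar_prod_def atLeast0LessThan X_def Y_def)
    also have "\<dots> = (S * T) $$ (i, j)"
      using i j pq zero by (intro mult_mat_index_sum_subset[OF S(1) T(1), symmetric]) auto
    also have "\<dots> = 1\<^sub>m p $$ (i, j)"
      using S(2) i j pq by simp
    finally show "(X * Y) $$ (i, j) = 1\<^sub>m p $$ (i, j)" .
  qed (use X Y in auto)
  then have "p = vec_space.rank p (X * Y)"
    using vec_space.det_rank_iff[of "1\<^sub>m p :: 'a mat" p] by simp
  also have "\<dots> \<le> vec_space.rank q Y"
    by (rule vec_space.rank_mult_left_le[OF Y X])
  also have "\<dots> \<le> q"
    by (rule vec_space.rank_le_nr[OF Y])
  finally show ?thesis .
qed

lemma aci_dims:
  assumes "\<And>k. N k \<in> carrier_mat m n"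
  shows "aci_rows N = m" "aci_cols N = n"
  using assms unfolding aci_rows_def aci_cols_def by auto

lemma aci_lmult_carrier:
  assumes "\<And>k. N k \<in> carrier_mat m n" "T \<in> carrier_mat m' m"
  shows "aci_lmult T N k \<in> carrier_mat m' n"
  using assms unfolding aci_lmult_def by auto

lemma completion_carrier: "completion N s \<in> carrier_mat (aci_rows N) (aci_cols N)"
  unfolding completion_def by auto

lemma completion_aci_lmult:
  fixes N :: "('a::field, 'v::finite) aci"
  assumes N: "\<And>k. N k \<in> carrier_mat m n" and T: "T \<in> carrier_mat m' m"
  shows "completion (aci_lmult T N) s = T * completion N s"
proof (rule eq_matI)
  note dims = aci_dims[of N, OF N] aci_dims[of "aci_lmult T N", OF aci_lmult_carrier[OF N T]]
  show "dim_row (completion (aci_lmult T N) s) = dim_row (T * completion N s)"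
    "dim_col (completion (aci_lmult T N) s) = dim_col (T * completion N s)"
    using T dims by (simp_all add: completion_def)
  fix i j assume "i < dim_row (T * completion N s)" "j < dim_col (T * completion N s)"
  then have i: "i < m'" and j: "j < n" using T dims by (auto simp: completion_def)
  have entry: "aci_lmult T N k $$ (i, j) = (\<Sum>l<m. T $$ (i, l) * N k $$ (l, j))" for k
    using N[of k] T i j by (simp add: aci_lmult_def scalar_prod_def atLeast0LessThan)
  have "completion (aci_lmult T N) s $$ (i, j) =
      (\<Sum>l<m. T $$ (i, l) * N None $$ (l, j))
    + (\<Sum>v\<in>UNIV. s v * (\<Sum>l<m. T $$ (i, l) * N (Some v) $$ (l, j)))"
    using i j dims by (simp add: completion_def entry)
  also have "\<dots> = (\<Sum>l<m. T $$ (i, l) * (N None $$ (l, j) + (\<Sum>v\<in>UNIV. s v * N (Some v) $$ (l, j))))"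
    by (simp add: sum_distrib_left sum.distrib distrib_left sum.swap[of _ UNIV] algebra_simps)
  also have "\<dots> = (T * completion N s) $$ (i, j)"
    using i j T dims by (simp add: completion_def scalar_prod_def atLeast0LessThan)
  finally show "completion (aci_lmult T N) s $$ (i, j) = (T * completion N s) $$ (i, j)" .
qed

lemma completion_rank_le:
  fixes N :: "('a::field, 'v::finite) aci"
  shows "mat_rank (completion N s) \<le> aci_rows N" "mat_rank (completion N s) \<le> aci_cols N"
  using vec_space.rank_le_nr[OF completion_carrier] vec_space.rank_le_nc[OF completion_carrier]
  unfolding mat_rank_def by (simp_all add: completion_def)

lemma
  fixes N :: "('a::field, 'v::finite) aci"
  shows maxRank_attained: "\<exists>s. maxRank N = mat_rank (completion N s)"
    and completion_rank_le_maxRank: "mat_rank (completion N s) \<le> maxRank N"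
proof -
  have fin: "finite (range (\<lambda>s. mat_rank (completion N s)))"
    by (rule finite_subset[OF _ finite_atMost[of "aci_rows N"]]) (use completion_rank_le(1) in auto)
  show "\<exists>s. maxRank N = mat_rank (completion N s)"
    using Max_in[OF fin] unfolding maxRank_def by auto
  show "mat_rank (completion N s) \<le> maxRank N"
    using Max_ge[OF fin] unfolding maxRank_def by auto
qed

lemma maxRank_le:
  fixes N :: "('a::field, 'v::finite) aci"
  shows "maxRank N \<le> aci_rows N" "maxRank N \<le> aci_cols N"
  using maxRank_attained[of N] completion_rank_le by (metis, metis)

lemma maxRank_aci_lmult_le:
  fixes N :: "('a::field, 'v::finite) aci"
  assumes N: "\<And>k. N k \<in> carrier_mat m n" and T: "T \<in> carrier_mat m' m"
  shows "maxRank (aci_lmult T N) \<le> maxRank N"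
proof -
  obtain s where s: "maxRank (aci_lmult T N) = mat_rank (completion (aci_lmult T N) s)"
    using maxRank_attained by blast
  have C: "completion N s \<in> carrier_mat m n"
    using completion_carrier[of N s] aci_dims[of N, OF N] by simp
  have "mat_rank (completion (aci_lmult T N) s) = vec_space.rank m' (T * completion N s)"
    using T by (simp add: completion_aci_lmult[OF N T] mat_rank_def)
  also have "\<dots> \<le> mat_rank (completion N s)"
    using vec_space.rank_mult_left_le[OF C T] C by (simp add: mat_rank_def)
  also have "\<dots> \<le> maxRank N"
    by (rule completion_rank_le_maxRank)
  finally show ?thesis using s by simp
qed

lemma blockA_dims: "aci_rows (blockA N p s) = p" "aci_cols (blockA N p s) = s"
  unfolding blockA_def aci_block_def aci_rows_def aci_cols_def by auto

lemma blockC_dims: "aci_rows (blockC N p s) = aci_rows N - p" "aci_cols (blockC N p s) = aci_cols N - s"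
  unfolding blockC_def aci_block_def aci_rows_def aci_cols_def by auto

lemma blockA_carrier: "blockA N p s k \<in> carrier_mat p s"
  unfolding blockA_def aci_block_def by auto

lemma blockC_carrier: "blockC N p s k \<in> carrier_mat (aci_rows N - p) (aci_cols N - s)"
  unfolding blockC_def aci_block_def by auto

lemma blockA_index: "i < p \<Longrightarrow> j < s \<Longrightarrow> blockA N p s k $$ (i, j) = N k $$ (i, j)"
  unfolding blockA_def aci_block_def by auto

lemma blockC_index:
  "i < aci_rows N - p \<Longrightarrow> j < aci_cols N - s \<Longrightarrow> blockC N p s k $$ (i, j) = N k $$ (i + p, j + s)"
  unfolding blockC_def aci_block_def by auto

lemma aci_lmult_index_lower_left_zero:
  assumes N: "\<And>k. N k \<in> carrier_mat m n" and T: "T \<in> carrier_mat m' m"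
    and llz: "lower_left_zero N p s" and i: "i < m'" and j: "j < s"
  shows "aci_lmult T N k $$ (i, j) = (\<Sum>l<p. T $$ (i, l) * blockA N p s k $$ (l, j))"
proof -
  have "aci_lmult T N k $$ (i, j) = (\<Sum>l<p. T $$ (i, l) * N k $$ (l, j))"
    unfolding aci_lmult_def
    using llz i j aci_dims[of N, OF N] unfolding lower_left_zero_def
    by (intro mult_mat_index_sum_subset[OF T N]) auto
  then show ?thesis
    using j by (simp add: blockA_index)
qed

lemma aci_lmult_zero_block:
  assumes N: "\<And>k. N k \<in> carrier_mat m n" and T: "T \<in> carrier_mat m' m"
    and llz: "lower_left_zero N p s" and indep: "rows_lin_indep (blockA N p s)"
    and llz': "lower_left_zero (aci_lmult T N) q s"
    and i: "q \<le> i" "i < m'" and l: "l < p"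
  shows "T $$ (i, l) = 0"
proof -
  have "(\<Sum>l<p. T $$ (i, l) * blockA N p s k $$ (l, j)) = 0" if j: "j < s" for k j
    using llz' i j aci_lmult_index_lower_left_zero[OF N T llz i(2) j, of k]
      aci_dims[of "aci_lmult T N", OF aci_lmult_carrier[OF N T]]
    unfolding lower_left_zero_def by simp
  then have "\<forall>l<p. T $$ (i, l) = 0"
    using indep[unfolded rows_lin_indep_def blockA_dims, rule_format, of "\<lambda>l. T $$ (i, l)"]
    by blast
  then show ?thesis using l by blast
qed

lemma blockA_aci_lmult:
  assumes N: "\<And>k. N k \<in> carrier_mat m n" and T: "T \<in> carrier_mat m m"
    and llz: "lower_left_zero N p s" and q: "q \<le> m"
  shows "blockA (aci_lmult T N) q s = aci_lmult (mat q p (\<lambda>(i, l). T $$ (i, l))) (blockA N p s)"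
proof
  fix k
  let ?T = "mat q p (\<lambda>(i, l). T $$ (i, l))"
  show "blockA (aci_lmult T N) q s k = aci_lmult ?T (blockA N p s) k"
  proof (rule eq_matI)
    fix i j assume "i < dim_row (aci_lmult ?T (blockA N p s) k)" "j < dim_col (aci_lmult ?T (blockA N p s) k)"
    then have i: "i < q" and j: "j < s"
      by (auto simp: aci_lmult_def blockA_def aci_block_def)
    have "blockA (aci_lmult T N) q s k $$ (i, j) = (\<Sum>l<p. T $$ (i, l) * blockA N p s k $$ (l, j))"
      using aci_lmult_index_lower_left_zero[OF N T llz _ j] i j q by (simp add: blockA_index)
    also have "\<dots> = aci_lmult ?T (blockA N p s) k $$ (i, j)"
      using i j blockA_carrier[of N p s k]
      by (simp add: aci_lmult_def scalar_prod_def atLeast0LessThan)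
    finally show "blockA (aci_lmult T N) q s k $$ (i, j) = aci_lmult ?T (blockA N p s) k $$ (i, j)" .
  qed (auto simp: aci_lmult_def blockA_def aci_block_def)
qed

lemma blockC_aci_lmult:
  assumes N: "\<And>k. N k \<in> carrier_mat m n" and T: "T \<in> carrier_mat m m"
    and llz: "lower_left_zero N p s"
    and zero: "\<And>i l. p \<le> i \<Longrightarrow> i < m \<Longrightarrow> l < p \<Longrightarrow> T $$ (i, l) = 0"
  shows "blockC (aci_lmult T N) p s
    = aci_lmult (mat (m - p) (m - p) (\<lambda>(i, l). T $$ (i + p, l + p))) (blockC N p s)"
proof
  fix k
  let ?T = "mat (m - p) (m - p) (\<lambda>(i, l). T $$ (i + p, l + p))"
  note dims = aci_dims[of N, OF N] aci_dims[of "aci_lmult T N", OF aci_lmult_carrier[OF N T]]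
  have pm: "p \<le> m" using llz dims unfolding lower_left_zero_def by simp
  show "blockC (aci_lmult T N) p s k = aci_lmult ?T (blockC N p s) k"
  proof (rule eq_matI)
    fix i j assume "i < dim_row (aci_lmult ?T (blockC N p s) k)" "j < dim_col (aci_lmult ?T (blockC N p s) k)"
    then have i: "i < m - p" and j: "j < n - s"
      using dims by (auto simp: aci_lmult_def blockC_def aci_block_def)
    have "blockC (aci_lmult T N) p s k $$ (i, j) = (T * N k) $$ (i + p, j + s)"
      using i j dims by (simp add: blockC_index aci_lmult_def)
    also have "\<dots> = (\<Sum>l\<in>{p..<m}. T $$ (i + p, l) * N k $$ (l, j + s))"
      using i j zero by (intro mult_mat_index_sum_subset[OF T N]) auto
    also have "\<dots> = (\<Sum>l<m - p. T $$ (i + p, l + p) * N k $$ (l + p, j + s))"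
      using pm sum.shift_bounds_nat_ivl[of "\<lambda>l. T $$ (i + p, l) * N k $$ (l, j + s)" 0 p "m - p"]
      by (simp add: atLeast0LessThan)
    also have "\<dots> = aci_lmult ?T (blockC N p s) k $$ (i, j)"
      using i j dims blockC_carrier[of N p s k]
      by (simp add: aci_lmult_def scalar_prod_def atLeast0LessThan blockC_index)
    finally show "blockC (aci_lmult T N) p s k $$ (i, j) = aci_lmult ?T (blockC N p s) k $$ (i, j)" .
  qed (use dims in \<open>auto simp: aci_lmult_def blockC_def aci_block_def\<close>)
qed

lemma decomp_form_of_aci_lmult:
  fixes N :: "('a::field, 'v::finite) aci"
  assumes N: "\<And>k. N k \<in> carrier_mat m n" and T: "T \<in> carrier_mat m m" "det T \<noteq> 0"
    and llz: "lower_left_zero N p s" and indep: "rows_lin_indep (blockA N p s)"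
    and decomp: "decomp_form b (aci_lmult T N) m n s q"
  shows "decomp_form b N m n s p"
proof -
  note dims = aci_dims[of N, OF N] aci_dims[of "aci_lmult T N", OF aci_lmult_carrier[OF N T(1)]]
  from decomp have llz': "lower_left_zero (aci_lmult T N) q s"
    and zero_size: "if b then zero_big m n (m - q) s else zero_medium m n (m - q) s"
    and FRmR': "FRmR (blockA (aci_lmult T N) q s)" and FCmR': "FCmR (blockC (aci_lmult T N) q s)"
    unfolding decomp_form_def by auto
  have pm: "p \<le> m" and qm: "q \<le> m"
    using llz llz' dims unfolding lower_left_zero_def by auto
  have T_zero: "T $$ (i, l) = 0" if "q \<le> i" "i < m" "l < p" for i l
    using aci_lmult_zero_block[OF N T(1) llz indep llz' that] .
  have "p \<le> q"
    using zero_block_le_of_det_non_zero[OF T pm qm T_zero] .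
  have rankA: "maxRank (blockA (aci_lmult T N) q s) \<le> maxRank (blockA N p s)"
    unfolding blockA_aci_lmult[OF N T(1) llz qm]
    by (rule maxRank_aci_lmult_le[OF blockA_carrier]) auto
  have "q \<le> p"
  proof (cases "s = 0")
    case True
    \<comment> \<open>a zero block without columns is at least Medium only if it has all m rows\<close>
    then show ?thesis
      using zero_size qm by (cases b) (auto simp: zero_big_def zero_medium_def)
  next
    case False
    then show ?thesis
      using FRmR' rankA maxRank_le(1)[of "blockA N p s"] unfolding FRmR_def blockA_dims by auto
  qed
  with \<open>p \<le> q\<close> have qp: "q = p" by simp
  have "FRmR (blockA N p s)"
    using FRmR' rankA maxRank_le(1)[of "blockA N p s"] unfolding FRmR_def blockA_dims qp by auto
  moreover have C: "blockC N p s k \<in> carrier_mat (m - p) (n - s)" for k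
    using blockC_carrier[of N p s k] dims by simp
  have "blockC (aci_lmult T N) p s
      = aci_lmult (mat (m - p) (m - p) (\<lambda>(i, l). T $$ (i + p, l + p))) (blockC N p s)"
    by (rule blockC_aci_lmult[OF N T(1) llz]) (use T_zero qp in auto)
  then have "maxRank (blockC (aci_lmult T N) p s) \<le> maxRank (blockC N p s)"
    using maxRank_aci_lmult_le[of "blockC N p s", OF C mat_carrier] by simp
  then have "FCmR (blockC N p s)"
    using FCmR' maxRank_le(2)[of "blockC N p s"] dims unfolding FCmR_def blockC_dims qp by auto
  ultimately show ?thesis
    using llz zero_size unfolding decomp_form_def qp by blast
qed

lemma permutation_mat_transpose_mult:
  fixes P :: "'a::field mat"
  assumes "permutation_mat m P"
  shows "P \<in> carrier_mat m m" "transpose_mat P * P = 1\<^sub>m m"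
proof -
  obtain \<pi> where \<pi>: "bij_betw \<pi> {0..<m} {0..<m}"
    and P: "P = mat m m (\<lambda>(i, j). if j = \<pi> i then 1 else 0)"
    using assms unfolding permutation_mat_def by blast
  show Pc: "P \<in> carrier_mat m m" unfolding P by simp
  define \<delta> :: "nat \<Rightarrow> nat \<Rightarrow> 'a" where "\<delta> x y = (if x = y then 1 else 0)" for x y
  show "transpose_mat P * P = 1\<^sub>m m"
  proof (rule eq_matI)
    fix i j assume "i < dim_row (1\<^sub>m m :: 'a mat)" "j < dim_col (1\<^sub>m m :: 'a mat)"
    then have i: "i < m" and j: "j < m" by auto
    have "(transpose_mat P * P) $$ (i, j) = (\<Sum>l\<in>{0..<m}. P $$ (l, i) * P $$ (l, j))"
      using Pc i j by (simp add: scalar_prod_def)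
    also have "\<dots> = (\<Sum>l\<in>{0..<m}. \<delta> (\<pi> l) i * \<delta> (\<pi> l) j)"
      using i j by (intro sum.cong) (auto simp: P \<delta>_def)
    also have "\<dots> = (\<Sum>x\<in>{0..<m}. \<delta> x i * \<delta> x j)"
      by (rule sum.reindex_bij_betw[OF \<pi>])
    also have "\<dots> = (\<Sum>x\<in>{0..<m}. if x = i then \<delta> i j else 0)"
      by (intro sum.cong) (auto simp: \<delta>_def)
    also have "\<dots> = 1\<^sub>m m $$ (i, j)"
      using i j by (simp add: \<delta>_def)
    finally show "(transpose_mat P * P) $$ (i, j) = 1\<^sub>m m $$ (i, j)" .
  qed (use Pc in auto)
qed

lemma aci_rmult_aci_lmult_left_inverse:
  assumes M: "\<And>k. M k \<in> carrier_mat m n" and Q: "Q \<in> carrier_mat n n'"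
    and R: "R \<in> carrier_mat m' m" and P: "P \<in> carrier_mat m m" "P' \<in> carrier_mat m m"
    and inv: "P' * P = 1\<^sub>m m"
  shows "aci_rmult (aci_lmult R M) Q = aci_lmult (R * P') (aci_rmult (aci_lmult P M) Q)"
proof
  fix k
  have MQ: "M k * Q \<in> carrier_mat m n'" using M[of k] Q by simp
  have "R * P' * (P * M k * Q) = R * (P' * (P * (M k * Q)))"
    using assoc_mult_mat[OF R P(2), of "P * M k * Q" n'] assoc_mult_mat[OF P(1) M[of k] Q] MQ P
    by simp
  also have "\<dots> = R * (M k * Q)"
    using assoc_mult_mat[OF P(2,1) MQ] inv MQ by (simp add: left_mult_one_mat)
  also have "\<dots> = R * M k * Q"
    using assoc_mult_mat[OF R M[of k] Q] by simp
  finally show "aci_rmult (aci_lmult R M) Q k = aci_lmult (R * P') (aci_rmult (aci_lmult P M) Q) k"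
    by (simp add: aci_lmult_def aci_rmult_def)
qed

theorem lemma4p6:
  fixes M :: "('a::field, 'v::finite) aci"
    and m n p :: nat and F :: "nat set" and P :: "'a mat"
  assumes "is_aci M m n"
    and "permutation_mat m P"
    and "lower_left_zero (aci_rmult (aci_lmult P M) (Q_F n F)) p (card F)"
    and "rows_lin_indep (blockA (aci_rmult (aci_lmult P M) (Q_F n F)) p (card F))"
  shows "(factor_set M m n F \<longrightarrow>
            decomp_form True (aci_rmult (aci_lmult P M) (Q_F n F)) m n (card F) p)
       \<and> (semifactor_set M m n F \<longrightarrow>
            decomp_form False (aci_rmult (aci_lmult P M) (Q_F n F)) m n (card F) p)"
proof -
  let ?Q = "Q_F n F :: 'a mat"
  let ?N = "aci_rmult (aci_lmult P M) ?Q"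
  have M: "M k \<in> carrier_mat m n" for k
    using assms(1) unfolding is_aci_def aci_dim_def by auto
  have Q: "?Q \<in> carrier_mat n n" unfolding Q_F_def by simp
  note P = permutation_mat_transpose_mult[OF assms(2)]
  have N: "?N k \<in> carrier_mat m n" for k
    using P(1) M[of k] Q by (simp add: aci_lmult_def aci_rmult_def)
  have "decomp_form b ?N m n (card F) p"
    if R: "R \<in> carrier_mat m m" "det R \<noteq> 0"
      and decomp: "decomp_form b (aci_rmult (aci_lmult R M) ?Q) m n (card F) q" for b R q
  proof (rule decomp_form_of_aci_lmult[OF N _ _ assms(3,4)])
    have PtP: "det (transpose_mat P) * det P = 1"
      using det_mult[of "transpose_mat P" m P] P by simp
    show "R * transpose_mat P \<in> carrier_mat m m" using R P by simp
    show "det (R * transpose_mat P) \<noteq> 0"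
      using R P PtP det_mult[of R m "transpose_mat P"] by auto
    show "decomp_form b (aci_lmult (R * transpose_mat P) ?N) m n (card F) q"
      using decomp aci_rmult_aci_lmult_left_inverse[of M, OF M Q R(1) P(1) _ P(2)] P(1) by simp
  qed
  then show ?thesis
    unfolding factor_set_def semifactor_set_def by blast
qed

end
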